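(* Let $\mathcal{G}$ be a graph class and let $G$ be a graph with $G\notin\mathcal{G}$. Let $\mathcal{M}$ be a $\mathcal{G}$-modular partition of $G$ and let $\mathcal{M}^*$ be the maximal modular partition of $G$. Then: (i) if $G$ or $\overline{G}$ is disconnected, then for any $M\in\mathcal{M}$ and $M'\in\mathcal{M}^*$, $M\cap M'\in\{M,M',\emptyset\}$; (ii) if $G$ and $\overline{G}$ are both connected, then for every $M\in\mathcal{M}$ there is $M'\in\mathcal{M}^*$ with $M\subseteq M'$.
   Context: A graph class is a (possibly infinite) set of graphs containing at least one non-empty graph. A module of $G=(V,E)$ is a set $M\subseteq V$ such that each $v\in V\setminus M$ is adjacent to all or to none of the vertices of $M$. A module $M$ is strong if for every module $M'$, either $M\subseteq M'$, $M'\subseteq M$ or $M\cap M'=\emptyset$; it is maximal if $M\subsetneq V$ and no module $M'$ satisfies $M\subsetneq M'\subsetneq V$. The maximal modular partition of $G$ is the unique partition of $V$ into maximal strong modules. A module $M$ is a $\mathcal{G}$-module if $G[M]\in\mathcal{G}$; a $\mathcal{G}$-modular partition of $G$ is a partition of $V(G)$ into $\mathcal{G}$-modules. $\overline{G}$ is the complement of $G$. *)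

theory Defs
  imports Main "HOL-Library.Disjoint_Sets"
begin

type_synonym 'a graph = "'a set \<times> ('a \<times> 'a) set"

definition verts :: "'a graph \<Rightarrow> 'a set" where "verts G = fst G"
definition edges :: "'a graph \<Rightarrow> ('a \<times> 'a) set" where "edges G = snd G"

definition wf_graph :: "'a graph \<Rightarrow> bool" where
  "wf_graph G \<longleftrightarrow> finite (verts G) \<and> edges G \<subseteq> verts G \<times> verts G
     \<and> sym (edges G) \<and> irrefl (edges G)"

definition adj :: "'a graph \<Rightarrow> 'a \<Rightarrow> 'a \<Rightarrow> bool" where
  "adj G u v \<longleftrightarrow> (u, v) \<in> edges G"

definition induced :: "'a graph \<Rightarrow> 'a set \<Rightarrow> 'a graph" where
  "induced G M = (M, edges G \<inter> (M \<times> M))"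

definition complement :: "'a graph \<Rightarrow> 'a graph" where
  "complement G = (verts G,
     {(u, v). u \<in> verts G \<and> v \<in> verts G \<and> u \<noteq> v \<and> (u, v) \<notin> edges G})"

definition connected_graph :: "'a graph \<Rightarrow> bool" where
  "connected_graph G \<longleftrightarrow> verts G \<noteq> {} \<and>
     (\<forall>u\<in>verts G. \<forall>v\<in>verts G. (u, v) \<in> (edges G)\<^sup>*)"

definition graph_class :: "'a graph set \<Rightarrow> bool" where
  "graph_class \<G> \<longleftrightarrow> (\<exists>H\<in>\<G>. wf_graph H \<and> verts H \<noteq> {})"

definition is_module :: "'a graph \<Rightarrow> 'a set \<Rightarrow> bool" where
  "is_module G M \<longleftrightarrow> M \<subseteq> verts G \<and>
     (\<forall>v\<in>verts G - M. (\<forall>x\<in>M. adj G v x) \<or> (\<forall>x\<in>M. \<not> adj G v x))"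

definition strong_module :: "'a graph \<Rightarrow> 'a set \<Rightarrow> bool" where
  "strong_module G M \<longleftrightarrow> is_module G M \<and>
     (\<forall>M'. is_module G M' \<longrightarrow> M \<subseteq> M' \<or> M' \<subseteq> M \<or> M \<inter> M' = {})"

definition maximal_strong_module :: "'a graph \<Rightarrow> 'a set \<Rightarrow> bool" where
  "maximal_strong_module G M \<longleftrightarrow> strong_module G M \<and> M \<subset> verts G \<and>
     \<not> (\<exists>M'. strong_module G M' \<and> M \<subset> M' \<and> M' \<subset> verts G)"

definition maximal_modular_partition :: "'a graph \<Rightarrow> 'a set set \<Rightarrow> bool" where
  "maximal_modular_partition G P \<longleftrightarrow> partition_on (verts G) P \<and>
     (\<forall>M\<in>P. maximal_strong_module G M)"

definition class_module :: "'a graph set \<Rightarrow> 'a graph \<Rightarrow> 'a set \<Rightarrow> bool" where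
  "class_module \<G> G M \<longleftrightarrow> is_module G M \<and> induced G M \<in> \<G>"

definition class_modular_partition :: "'a graph set \<Rightarrow> 'a graph \<Rightarrow> 'a set set \<Rightarrow> bool" where
  "class_modular_partition \<G> G P \<longleftrightarrow> partition_on (verts G) P \<and>
     (\<forall>M\<in>P. class_module \<G> G M)"

end

theory Submission
  imports Defs
begin

text \<open>Part (i) only uses that members of \<open>\<M>s\<close> are strong. For part (ii), a module \<open>M\<close>
  of \<open>\<M>\<close> is proper, because \<open>G \<notin> \<G>\<close>; enlarge it to a maximal proper module \<open>N\<close>. If a module
  \<open>K\<close> overlapped \<open>N\<close>, then \<open>N \<union> K\<close> would be a module, hence all of \<open>V\<close>; but two overlapping
  modules covering \<open>V\<close> make all edges between \<open>N - K\<close> and \<open>K\<close> present or all absent, so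
  \<open>N - K\<close> is a union of components of \<open>G\<close> or of \<open>\<overline>G\<close>. Thus \<open>N\<close> is a strong proper module,
  and it lies in the maximal strong module meeting it.\<close>

lemma not_connected_if_edge_closed:
  assumes x: "x \<in> verts G" "x \<in> S" and y: "y \<in> verts G" "y \<notin> S"
    and closed: "\<And>a b. (a, b) \<in> edges G \<Longrightarrow> a \<in> S \<Longrightarrow> b \<in> S"
  shows "\<not> connected_graph G"
proof
  assume "connected_graph G"
  then have "(x, y) \<in> (edges G)\<^sup>*"
    using x(1) y(1) unfolding connected_graph_def by blast
  then have "y \<in> S"
    by (induction rule: rtrancl_induct) (use x(2) closed in auto)
  with y(2) show False ..
qed

lemma edges_complement_iff:
  "(u, v) \<in> edges (complement G) \<longleftrightarrow>
     u \<in> verts G \<and> v \<in> verts G \<and> u \<noteq> v \<and> \<not> adj G u v"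
  unfolding complement_def edges_def verts_def adj_def by simp

lemma verts_complement [simp]: "verts (complement G) = verts G"
  unfolding complement_def verts_def by simp

lemma adj_sym:
  assumes "wf_graph G"
  shows "adj G u v = adj G v u"
  using assms unfolding wf_graph_def sym_def adj_def by blast

lemma module_Un:
  assumes A: "is_module G A" and B: "is_module G B" and "z \<in> A" "z \<in> B"
  shows "is_module G (A \<union> B)"
  unfolding is_module_def
proof (intro conjI ballI)
  show "A \<union> B \<subseteq> verts G" using A B unfolding is_module_def by blast
  fix v assume v: "v \<in> verts G - (A \<union> B)"
  then have "(\<forall>x\<in>A. adj G v x) \<or> (\<forall>x\<in>A. \<not> adj G v x)"
    and "(\<forall>x\<in>B. adj G v x) \<or> (\<forall>x\<in>B. \<not> adj G v x)"
    using A B unfolding is_module_def by blast+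
  then show "(\<forall>x\<in>A \<union> B. adj G v x) \<or> (\<forall>x\<in>A \<union> B. \<not> adj G v x)"
    using \<open>z \<in> A\<close> \<open>z \<in> B\<close> by blast
qed

lemma overlapping_modules_covering_imp_not_connected:
  assumes wf: "wf_graph G" and A: "is_module G A" and B: "is_module G B"
    and cover: "A \<union> B = verts G" and x: "x \<in> A - B" and y: "y \<in> B - A"
  shows "\<not> connected_graph G \<or> \<not> connected_graph (complement G)"
proof -
  have uniform: "adj G a b = adj G x y" if a: "a \<in> A - B" and b: "b \<in> B" for a b
  proof -
    have "adj G a b = adj G a y"
      using B cover a b y unfolding is_module_def by blast
    also have "\<dots> = adj G y a" by (rule adj_sym[OF wf])
    also have "\<dots> = adj G y x"
      using A cover a x y unfolding is_module_def by blast
    also have "\<dots> = adj G x y" by (rule adj_sym[OF wf])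
    finally show ?thesis .
  qed
  have xy: "x \<in> verts G" "x \<in> A - B" "y \<in> verts G" "y \<notin> A - B"
    using cover x y by auto
  show ?thesis
  proof (cases "adj G x y")
    case True
    have "\<not> connected_graph (complement G)"
    proof (rule not_connected_if_edge_closed[where G = "complement G" and x = x and y = y])
      show "x \<in> verts (complement G)" "y \<in> verts (complement G)" using xy by simp_all
      show "x \<in> A - B" "y \<notin> A - B" using xy by simp_all
      show "b \<in> A - B" if "(a, b) \<in> edges (complement G)" "a \<in> A - B" for a b
        using that uniform True cover unfolding edges_complement_iff by blast
    qed
    then show ?thesis ..
  next
    case False
    have "\<not> connected_graph G"
    proof (rule not_connected_if_edge_closed[OF xy])
      show "b \<in> A - B" if "(a, b) \<in> edges G" "a \<in> A - B" for a b
      proof -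
        have "b \<in> verts G" "adj G a b"
          using that wf unfolding wf_graph_def adj_def by auto
        then show ?thesis using that(2) uniform False cover by blast
      qed
    qed
    then show ?thesis ..
  qed
qed

lemma maximal_proper_module_is_strong:
  assumes wf: "wf_graph G"
    and conn: "connected_graph G" "connected_graph (complement G)"
    and N: "is_module G N"
    and max: "\<And>K. is_module G K \<Longrightarrow> N \<subseteq> K \<Longrightarrow> K \<subset> verts G \<Longrightarrow> K = N"
  shows "strong_module G N"
  unfolding strong_module_def
proof (intro conjI allI impI)
  show "is_module G N" by (fact N)
next
  fix K assume K: "is_module G K"
  show "N \<subseteq> K \<or> K \<subseteq> N \<or> N \<inter> K = {}"
  proof (rule ccontr)
    assume overlap: "\<not> (N \<subseteq> K \<or> K \<subseteq> N \<or> N \<inter> K = {})"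
    then obtain z where "z \<in> N" "z \<in> K" by blast
    then have NK: "is_module G (N \<union> K)" by (rule module_Un[OF N K])
    show False
    proof (cases "N \<union> K = verts G")
      case True
      then show False
        using overlapping_modules_covering_imp_not_connected[OF wf N K True] overlap conn
        by blast
    next
      case False
      then have "N \<union> K \<subset> verts G" using NK unfolding is_module_def by blast
      then show False using max[OF NK] overlap by blast
    qed
  qed
qed

lemma proper_module_extends_to_maximal:
  assumes "finite (verts G)" "is_module G M" "M \<subset> verts G"
  obtains N where "is_module G N" "M \<subseteq> N" "N \<subset> verts G"
    "\<And>K. is_module G K \<Longrightarrow> N \<subseteq> K \<Longrightarrow> K \<subset> verts G \<Longrightarrow> K = N"
proof -
  let ?S = "{N. is_module G N \<and> M \<subseteq> N \<and> N \<subset> verts G}"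
  have "?S \<subseteq> Pow (verts G)" by blast
  then have "finite ?S" using assms(1) by (simp add: finite_subset)
  moreover have "?S \<noteq> {}" using assms(2,3) by blast
  ultimately obtain N where N: "N \<in> ?S" and max: "\<forall>K\<in>?S. N \<subseteq> K \<longrightarrow> N = K"
    by (rule finite_has_maximal[THEN bexE])
  show ?thesis
  proof (rule that)
    show "is_module G N" "M \<subseteq> N" "N \<subset> verts G" using N by simp_all
    show "K = N" if K: "is_module G K" "N \<subseteq> K" "K \<subset> verts G" for K
    proof -
      have "K \<in> ?S" using K N by auto
      then show ?thesis using max K(2) by auto
    qed
  qed
qed

lemma strong_module_subset_maximal_strong_module:
  assumes N: "strong_module G N" "N \<subset> verts G"
    and Q: "maximal_strong_module G Q" and "z \<in> N" "z \<in> Q"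
  shows "N \<subseteq> Q"
proof -
  have "is_module G Q" using Q unfolding maximal_strong_module_def strong_module_def by blast
  then have "N \<subseteq> Q \<or> Q \<subseteq> N \<or> N \<inter> Q = {}" using N(1) unfolding strong_module_def by blast
  moreover have "\<not> Q \<subset> N" using Q N unfolding maximal_strong_module_def by blast
  ultimately show ?thesis using \<open>z \<in> N\<close> \<open>z \<in> Q\<close> by blast
qed

lemma induced_verts:
  assumes "wf_graph G"
  shows "induced G (verts G) = G"
  using assms unfolding induced_def wf_graph_def verts_def edges_def by (cases G) auto

lemma class_module_proper:
  assumes "wf_graph G" "G \<notin> \<G>" "class_module \<G> G M"
  shows "M \<subset> verts G"
  using assms induced_verts unfolding class_module_def is_module_def by fastforce

theorem lemma3:
  fixes \<G> :: "'a graph set" and G :: "'a graph" and \<M> \<M>s :: "'a set set"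
  assumes "graph_class \<G>"
    and "wf_graph G"
    and "G \<notin> \<G>"
    and "class_modular_partition \<G> G \<M>"
    and "maximal_modular_partition G \<M>s"
  shows "(\<not> connected_graph G \<or> \<not> connected_graph (complement G) \<longrightarrow>
            (\<forall>M\<in>\<M>. \<forall>M'\<in>\<M>s. M \<inter> M' \<in> {M, M', {}}))
       \<and> (connected_graph G \<and> connected_graph (complement G) \<longrightarrow>
            (\<forall>M\<in>\<M>. \<exists>M'\<in>\<M>s. M \<subseteq> M'))"
proof (intro conjI impI ballI)
  fix M M' assume "M \<in> \<M>" "M' \<in> \<M>s"
  then have "is_module G M" "strong_module G M'"
    using assms(4,5) by (simp_all add: class_modular_partition_def class_module_def
      maximal_modular_partition_def maximal_strong_module_def)
  then show "M \<inter> M' \<in> {M, M', {}}" unfolding strong_module_def by blast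
next
  fix M assume conn: "connected_graph G \<and> connected_graph (complement G)" and "M \<in> \<M>"
  then have M: "class_module \<G> G M" "M \<noteq> {}"
    using assms(4) by (auto simp: class_modular_partition_def partition_on_def)
  have "finite (verts G)" using assms(2) by (simp add: wf_graph_def)
  moreover have "is_module G M" using M(1) by (simp add: class_module_def)
  ultimately obtain N where N: "is_module G N" "M \<subseteq> N" "N \<subset> verts G"
    and max: "\<And>K. is_module G K \<Longrightarrow> N \<subseteq> K \<Longrightarrow> K \<subset> verts G \<Longrightarrow> K = N"
    using class_module_proper[OF assms(2,3) M(1)] by (rule proper_module_extends_to_maximal) blast
  have "strong_module G N"
    using maximal_proper_module_is_strong[OF assms(2) _ _ N(1) max] conn by blast
  obtain z where "z \<in> M" using M(2) by blast
  then have "z \<in> verts G" using N(2,3) by blast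
  moreover have "\<Union> \<M>s = verts G"
    using assms(5) by (simp add: maximal_modular_partition_def partition_on_def)
  ultimately obtain Q where Q: "Q \<in> \<M>s" "z \<in> Q" by blast
  then have "maximal_strong_module G Q"
    using assms(5) by (simp add: maximal_modular_partition_def)
  moreover have "z \<in> N" using \<open>z \<in> M\<close> N(2) by blast
  ultimately have "N \<subseteq> Q"
    by (rule strong_module_subset_maximal_strong_module[OF \<open>strong_module G N\<close> N(3) _ _ Q(2)])
  then show "\<exists>M'\<in>\<M>s. M \<subseteq> M'" using Q(1) N(2) by blast
qed

end
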